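(* Consider adversarial training. On the event $\mathcal E$, fix an iteration $t\le T$ and suppose that the noise-stability bound $|\langle\mathbf w^{(\tau)}_r,\mathbf x_{i,j}\rangle|\le3\sigma_0\sigma_n\sqrt{d\log(16NmP/\delta)}+\dfrac{21p_{\mathrm{un}}NP\log^{1/3}T}{\sqrt d}\sqrt{\log(16N^2P^2/\delta)}$ holds for all $r\in[m]$, $i\in\mathcal S_L$, $j\ne s(\mathbf X_i)$ and all iterations $\tau\le t$. Then for all filters $r\in[m]$, $w^{(t)}_{r,1}\le\dfrac{3\log^{1/3}T}{\alpha}$.
   Context: Data. Fix integers $N,P,d,m$ and reals $\alpha,\sigma_n,\sigma_0,\eta,\epsilon,\Gamma>0$, $\delta\in(0,1)$, and a horizon $T\in\mathbb N$. Let $\mathbf u=\mathbf e_1$, $\mathbf v=\mathbf e_d$ and $\Pi_{\mathcal F}$ the orthogonal projection onto $\mathrm{span}\{\mathbf u,\mathbf v\}$. Fix a partition $[N]=\mathcal S_L\sqcup\mathcal S_U$, $p_{\mathrm{un}}=|\mathcal S_U|/N$. Independently for each $i$: $y_i$ uniform on $\{\pm1\}$, $s(\mathbf X_i)$ uniform on $[P]$, $\mathbf x_{i,s(\mathbf X_i)}=\alpha y_i\mathbf u$ if $i\in\mathcal S_L$ and $\alpha y_i\mathbf v$ if $i\in\mathcal S_U$, noise patches $\mathbf x_{i,p}\sim\mathcal N(\mathbf 0,\sigma_n^2(\mathbf I_d-\Pi_{\mathcal F}))$ for $p\ne s(\mathbf X_i)$, independent. Student $f_{\mathbf W}(\mathbf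 X)=\sum_{r=1}^m\sum_{p=1}^P[\phi(\langle\mathbf w_r,\mathbf x_p\rangle)-\phi(-\langle\mathbf w_r,\mathbf x_p\rangle)]$, $\phi(z)=(\max\{0,z\})^3$; $w^{(0)}_{r,j}\sim\mathcal N(0,\sigma_0^2)$ i.i.d. for $j<d$, $w^{(0)}_{r,d}=0$, $w_{r,d}=0$ maintained; $w_{r,1}=\langle\mathbf w_r,\mathbf e_1\rangle$. $\ell(z)=\log(1+e^{-z})$. $\tilde{\mathbf X}^{(t)}_i$ maximizes $\ell(y_if_{\mathbf W^{(t)}}(\mathbf X'))$ over $\|\mathbf X'-\mathbf X_i\|_\infty\le\epsilon$, $\mathbf X'-\mathbf X_i\in\mathrm{span}(\mathbf x_{i,s(\mathbf X_i)})$. Adversarial training: $\mathbf W^{(t+1)}=\mathbf W^{(t)}-\frac\eta N\sum_i\nabla_{\mathbf W}\ell(y_if_{\mathbf W}(\tilde{\mathbf X}^{(t)}_i))|_{\mathbf W^{(t)}}$ with $\tilde{\mathbf X}^{(t)}_i$ fixed. Standing parameter conditions (for a sufficiently large universal constant $C>0$): (i) $T\ge CN/(\eta\sigma_0\sigma_n^3d^{3/2})$; (ii) $d\ge Cm^2P^2N^2\log^4(TNmP/\delta)$; (iii) $\alpha\ge C\sigma_n\sqrt d\log(TNmP/\delta)/(N^{1/3}(1-p_{\mathrm{un}})^{1/3})$; (iv) $\sigma_0\le C^{-1}\min\{\frac{1}{m^{2/3}P^{2/3}\sigma_n\sqrt d},\frac{1}{\alpha m^{2/3}},\frac{1}{\sigma_nm^2P^{1/2}d}\}/\log(TdNmP/\delta)$;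 (v) $\eta\le C^{-1}\min\{\frac1{\alpha^3\sigma_0},\frac1{\sigma_n^2d},\frac1{\alpha^2}\}/\log(TNmP/\delta)$; (vi) $C\sigma_nmP^{1/2}\log(TdNP/\delta)\le\epsilon<C^{-1}\min\{\alpha,\frac1{m\sigma_0d}\}$; (vii) either $p_{\mathrm{un}}=0$, or $C/N\le p_{\mathrm{un}}\le C^{-1}\log d/N$, and $N\ge CmP\log(TdNmP/\delta)$; (viii) $C\log(NP/\delta)\le m\le C\log^Cd$, $2\le P\le C$; (ix) $\Gamma\ge Cd$. Event $\mathcal E$: for all $r\in[m]$, $i,k\in[N]$, $j\ne s(\mathbf X_i)$, $q\ne s(\mathbf X_k)$, $(i,j)\ne(k,q)$: $\frac12\sigma_n^2d\le\|\mathbf x_{i,j}\|_2^2\le\frac32\sigma_n^2d$; $|\langle\mathbf x_{i,j},\mathbf x_{k,q}\rangle|\le2\sigma_n^2\sqrt{d\log(16N^2P^2/\delta)}$; $\|\mathbf x_{i,j}\|_\infty\le\sigma_n\sqrt{2\log(16dNP/\delta)}$; $\|\mathbf w_r^{(0)}\|_2\le2\sigma_0\sqrt d$; $|\langle\mathbf w^{(0)}_r,\mathbf e_1\rangle|\le\sigma_0\sqrt{2\log(16m/\delta)}$; $|\langle\mathbf w^{(0)}_r,\mathbf x_{i,j}\rangle|\le2\sigma_0\sigma_n\sqrt{d\log(16NmP/\delta)}$; $\frac12\sigma_0\le\max_r\langle\mathbf w^{(0)}_r,\mathbf e_1\rangle\le\sigma_0\sqrt{2\log(16m/\delta)}$;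 $\frac14\sigma_0\sigma_n\sqrt d\le\max_ry_i\langle\mathbf w^{(0)}_r,\mathbf x_{i,j}\rangle\le2\sigma_0\sigma_n\sqrt{d\log(16NmP/\delta)}$. *)

theory Defs
  imports "HOL-Analysis.Analysis"
begin

text \<open>Vectors in R^d are functions nat => real with coordinates 1..d.
  A data point X is a function p => j => real (patch p in 1..P, coordinate j in 1..d).
  Weights W r j: filter r in 1..m, coordinate j in 1..d.\<close>

definition ip :: "nat \<Rightarrow> (nat \<Rightarrow> real) \<Rightarrow> (nat \<Rightarrow> real) \<Rightarrow> real" where
  "ip d x y = (\<Sum>j=1..d. x j * y j)"

definition sqnorm :: "nat \<Rightarrow> (nat \<Rightarrow> real) \<Rightarrow> real" where
  "sqnorm d x = (\<Sum>j=1..d. (x j)^2)"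

definition infnorm_d :: "nat \<Rightarrow> (nat \<Rightarrow> real) \<Rightarrow> real" where
  "infnorm_d d x = Max ((\<lambda>j. \<bar>x j\<bar>) ` {1..d})"

definition evec :: "nat \<Rightarrow> nat \<Rightarrow> real" where
  "evec k = (\<lambda>j. if j = k then 1 else 0)"

definition phi :: "real \<Rightarrow> real" where
  "phi z = (max 0 z)^3"

definition fW :: "nat \<Rightarrow> nat \<Rightarrow> nat \<Rightarrow> (nat \<Rightarrow> nat \<Rightarrow> real) \<Rightarrow> (nat \<Rightarrow> nat \<Rightarrow> real) \<Rightarrow> real" where
  "fW m P d W X = (\<Sum>r=1..m. \<Sum>p=1..P. phi (ip d (W r) (X p)) - phi (- ip d (W r) (X p)))"

definition logloss :: "real \<Rightarrow> real" where
  "logloss z = ln (1 + exp (- z))"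

definition adv_feasible :: "nat \<Rightarrow> nat \<Rightarrow> real \<Rightarrow> (nat \<Rightarrow> nat \<Rightarrow> real) \<Rightarrow> nat \<Rightarrow> (nat \<Rightarrow> nat \<Rightarrow> real) \<Rightarrow> bool" where
  "adv_feasible P d eps Xi s X' \<longleftrightarrow>
     (\<exists>c::real. \<forall>p\<in>{1..P}. \<forall>j\<in>{1..d}. X' p j - Xi p j = (if p = s then c * Xi p j else 0)) \<and>
     (\<forall>p\<in>{1..P}. \<forall>j\<in>{1..d}. \<bar>X' p j - Xi p j\<bar> \<le> eps)"

definition is_adv :: "nat \<Rightarrow> nat \<Rightarrow> nat \<Rightarrow> real \<Rightarrow> (nat \<Rightarrow> nat \<Rightarrow> real) \<Rightarrow> real \<Rightarrow> (nat \<Rightarrow> nat \<Rightarrow> real) \<Rightarrow> nat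
    \<Rightarrow> (nat \<Rightarrow> nat \<Rightarrow> real) \<Rightarrow> bool" where
  "is_adv m P d eps W yi Xi s Xt \<longleftrightarrow> adv_feasible P d eps Xi s Xt \<and>
     (\<forall>X'. adv_feasible P d eps Xi s X' \<longrightarrow> logloss (yi * fW m P d W X') \<le> logloss (yi * fW m P d W Xt))"

text \<open>One adversarial-training GD step; the trainable coordinates are j = 1..d-1
  (coordinate d is kept at its initial value 0: "w_{r,d}=0 maintained").\<close>
definition train_step :: "nat \<Rightarrow> nat \<Rightarrow> nat \<Rightarrow> nat \<Rightarrow> real \<Rightarrow> (nat \<Rightarrow> real) \<Rightarrow> (nat \<Rightarrow> nat \<Rightarrow> nat \<Rightarrow> real)
    \<Rightarrow> (nat \<Rightarrow> nat \<Rightarrow> real) \<Rightarrow> (nat \<Rightarrow> nat \<Rightarrow> real)" where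
  "train_step N m P d eta y Xadv W = (\<lambda>r j.
     if 1 \<le> j \<and> j < d then
       W r j - eta / real N * (\<Sum>i=1..N.
          deriv (\<lambda>z. logloss (y i * fW m P d (W(r := (W r)(j := z))) (Xadv i))) (W r j))
     else W r j)"

definition data_support :: "nat \<Rightarrow> nat \<Rightarrow> nat \<Rightarrow> real \<Rightarrow> nat set \<Rightarrow> nat set \<Rightarrow> (nat \<Rightarrow> real) \<Rightarrow> (nat \<Rightarrow> nat)
    \<Rightarrow> (nat \<Rightarrow> nat \<Rightarrow> nat \<Rightarrow> real) \<Rightarrow> bool" where
  "data_support N P d alpha SL SU y s X \<longleftrightarrow>
     SL \<union> SU = {1..N} \<and> SL \<inter> SU = {} \<and>
     (\<forall>i\<in>{1..N}. (y i = 1 \<or> y i = -1) \<and> s i \<in> {1..P} \<and>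
        (\<forall>j\<in>{1..d}. X i (s i) j = alpha * y i * (if i \<in> SL then evec 1 j else evec d j)) \<and>
        (\<forall>p\<in>{1..P}. p \<noteq> s i \<longrightarrow> X i p 1 = 0 \<and> X i p d = 0))"

definition event_E :: "nat \<Rightarrow> nat \<Rightarrow> nat \<Rightarrow> nat \<Rightarrow> real \<Rightarrow> real \<Rightarrow> real \<Rightarrow> (nat \<Rightarrow> real) \<Rightarrow> (nat \<Rightarrow> nat)
    \<Rightarrow> (nat \<Rightarrow> nat \<Rightarrow> nat \<Rightarrow> real) \<Rightarrow> (nat \<Rightarrow> nat \<Rightarrow> real) \<Rightarrow> bool" where
  "event_E N P d m sn s0 delta y s X W0 \<longleftrightarrow>
     (\<forall>i\<in>{1..N}. \<forall>j\<in>{1..P}. j \<noteq> s i \<longrightarrow>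
        sn^2 * d / 2 \<le> sqnorm d (X i j) \<and> sqnorm d (X i j) \<le> 3/2 * sn^2 * d) \<and>
     (\<forall>i\<in>{1..N}. \<forall>k\<in>{1..N}. \<forall>j\<in>{1..P}. \<forall>q\<in>{1..P}. j \<noteq> s i \<longrightarrow> q \<noteq> s k \<longrightarrow> (i, j) \<noteq> (k, q) \<longrightarrow>
        \<bar>ip d (X i j) (X k q)\<bar> \<le> 2 * sn^2 * sqrt (d * ln (16 * N^2 * P^2 / delta))) \<and>
     (\<forall>i\<in>{1..N}. \<forall>j\<in>{1..P}. j \<noteq> s i \<longrightarrow>
        infnorm_d d (X i j) \<le> sn * sqrt (2 * ln (16 * d * N * P / delta))) \<and>
     (\<forall>r\<in>{1..m}. sqrt (sqnorm d (W0 r)) \<le> 2 * s0 * sqrt d) \<and>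
     (\<forall>r\<in>{1..m}. \<bar>ip d (W0 r) (evec 1)\<bar> \<le> s0 * sqrt (2 * ln (16 * m / delta))) \<and>
     (\<forall>r\<in>{1..m}. \<forall>i\<in>{1..N}. \<forall>j\<in>{1..P}. j \<noteq> s i \<longrightarrow>
        \<bar>ip d (W0 r) (X i j)\<bar> \<le> 2 * s0 * sn * sqrt (d * ln (16 * N * m * P / delta))) \<and>
     s0 / 2 \<le> Max ((\<lambda>r. ip d (W0 r) (evec 1)) ` {1..m}) \<and>
     Max ((\<lambda>r. ip d (W0 r) (evec 1)) ` {1..m}) \<le> s0 * sqrt (2 * ln (16 * m / delta)) \<and>
     (\<forall>i\<in>{1..N}. \<forall>j\<in>{1..P}. j \<noteq> s i \<longrightarrow>
        s0 * sn * sqrt d / 4 \<le> Max ((\<lambda>r. y i * ip d (W0 r) (X i j)) ` {1..m}) \<and>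
        Max ((\<lambda>r. y i * ip d (W0 r) (X i j)) ` {1..m}) \<le> 2 * s0 * sn * sqrt (d * ln (16 * N * m * P / delta)))"

text \<open>Standing parameter conditions (i)-(ix) for the constant C.  pun = |S_U| / N.\<close>
definition standing_conds :: "real \<Rightarrow> nat \<Rightarrow> nat \<Rightarrow> nat \<Rightarrow> nat \<Rightarrow> real \<Rightarrow> real \<Rightarrow> real \<Rightarrow> real \<Rightarrow> real
    \<Rightarrow> real \<Rightarrow> real \<Rightarrow> nat \<Rightarrow> real \<Rightarrow> bool" where
  "standing_conds C N P d m alpha sn s0 eta eps Gam delta T pun \<longleftrightarrow>
     alpha > 0 \<and> sn > 0 \<and> s0 > 0 \<and> eta > 0 \<and> eps > 0 \<and> Gam > 0 \<and> 0 < delta \<and> delta < 1 \<and>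
     \<comment> \<open>(i)\<close>
     real T \<ge> C * N / (eta * s0 * sn^3 * d powr (3/2)) \<and>
     \<comment> \<open>(ii)\<close>
     real d \<ge> C * m^2 * P^2 * N^2 * (ln (T * N * m * P / delta))^4 \<and>
     \<comment> \<open>(iii)\<close>
     alpha \<ge> C * sn * sqrt d * ln (T * N * m * P / delta) / (N powr (1/3) * (1 - pun) powr (1/3)) \<and>
     \<comment> \<open>(iv)\<close>
     s0 \<le> inverse C * min (1 / (m powr (2/3) * P powr (2/3) * sn * sqrt d))
                (min (1 / (alpha * m powr (2/3))) (1 / (sn * m^2 * sqrt P * d)))
           / ln (T * d * N * m * P / delta) \<and>
     \<comment> \<open>(v)\<close>
     eta \<le> inverse C * min (1 / (alpha^3 * s0)) (min (1 / (sn^2 * d)) (1 / alpha^2))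
           / ln (T * N * m * P / delta) \<and>
     \<comment> \<open>(vi)\<close>
     C * sn * m * sqrt P * ln (T * d * N * P / delta) \<le> eps \<and>
     eps < inverse C * min alpha (1 / (m * s0 * d)) \<and>
     \<comment> \<open>(vii)\<close>
     (pun = 0 \<or> (C / N \<le> pun \<and> pun \<le> inverse C * ln d / N)) \<and>
     real N \<ge> C * m * P * ln (T * d * N * m * P / delta) \<and>
     \<comment> \<open>(viii)\<close>
     C * ln (N * P / delta) \<le> m \<and> m \<le> C * (ln d) powr C \<and> 2 \<le> P \<and> P \<le> C \<and>
     \<comment> \<open>(ix)\<close>
     Gam \<ge> C * d"

end

theory Submission
  imports Defs
begin

text \<open>
  Only the signal coordinate w(r,1) matters, and only labeled points move it: every patch of an
  unlabeled example and every noise patch vanishes in coordinate 1, and the adversary can only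
  rescale the signal patch, so on a labeled point it becomes a y e1 with |a - alpha| <= eps <= alpha/5.
  Hence one gradient step adds the nonnegative amount eta/N sum_i sigma(z_i) 3 a_i^3 w(r,1)^2, where
  sigma = -logloss' and z_i is the margin, and the noise bound gives z_i >= sum_r a_i^3 w(r,1)^3 - 1/4.
  Put A = (log T)^(1/3) / alpha. While w(r,1) <= 2A a step adds at most A/2 because eta is small;
  once w(r,1) > 2A the margin exceeds 2 log T, so sigma <= 1/T^2 and a step adds at most A/(2T).
  By induction w(r,1) <= 5A/2 + tau A/(2T) <= 3A for tau <= T. What remains is to check that the
  standing conditions with C = 10^6 make eta, the initialization and the noise terms small enough.
\<close>

section \<open>The network and the gradient of the loss\<close>

lemma phi_minus_phi_neg: "phi z - phi (- z) = z ^ 3"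
  unfolding phi_def by (cases "z \<ge> 0") (auto simp: max_def power3_eq_cube)

lemma fW_eq_sum_cubes: "fW m P d W X = (\<Sum>r=1..m. \<Sum>p=1..P. (ip d (W r) (X p)) ^ 3)"
  unfolding fW_def by (simp add: phi_minus_phi_neg)

lemma ip_cong: "(\<And>j. j \<in> {1..d} \<Longrightarrow> x j = x' j) \<Longrightarrow> ip d v x = ip d v x'"
  unfolding ip_def by (rule sum.cong) auto

lemma ip_fun_upd:
  assumes "k \<in> {1..d}"
  shows "ip d (v(k := z)) x = ip d v x + (z - v k) * x k"
proof -
  have "ip d (v(k := z)) x = (\<Sum>j=1..d. v j * x j + (if j = k then (z - v k) * x k else 0))"
    unfolding ip_def by (rule sum.cong) (auto simp: algebra_simps)
  then show ?thesis
    using assms by (simp add: sum.distrib ip_def)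
qed

lemma ip_scaled_evec:
  assumes "k \<in> {1..d}" "\<And>j. j \<in> {1..d} \<Longrightarrow> x j = c * evec k j"
  shows "ip d v x = v k * c"
proof -
  have "ip d v x = (\<Sum>j=1..d. if j = k then v k * c else 0)"
    unfolding ip_def by (rule sum.cong) (auto simp: assms(2) evec_def)
  then show ?thesis
    using assms(1) by simp
qed

lemma fW_fun_upd_coord:
  assumes "r \<in> {1..m}" "s \<in> {1..P}" "k \<in> {1..d}"
    and "\<And>p. p \<in> {1..P} \<Longrightarrow> p \<noteq> s \<Longrightarrow> X p k = 0"
  shows "fW m P d (W(r := (W r)(k := z))) X
    = fW m P d W X + (ip d (W r) (X s) + (z - W r k) * X s k) ^ 3 - (ip d (W r) (X s)) ^ 3"
proof -
  let ?D = "(ip d (W r) (X s) + (z - W r k) * X s k) ^ 3 - (ip d (W r) (X s)) ^ 3"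
  have "(ip d ((W(r := (W r)(k := z))) r') (X p)) ^ 3 - (ip d (W r') (X p)) ^ 3
      = (if p = s then if r' = r then ?D else 0 else 0)" if "p \<in> {1..P}" for r' p
    using that assms(3,4) by (auto simp: ip_fun_upd)
  then have "fW m P d (W(r := (W r)(k := z))) X - fW m P d W X
      = (\<Sum>r'=1..m. \<Sum>p=1..P. if p = s then if r' = r then ?D else 0 else 0)"
    unfolding fW_eq_sum_cubes sum_subtractf[symmetric] by (intro sum.cong) auto
  also have "\<dots> = ?D"
    using assms(1,2) by simp
  finally show ?thesis
    by simp
qed

definition logloss_slope :: "real \<Rightarrow> real" where
  "logloss_slope u = exp (- u) / (1 + exp (- u))"

lemma logloss_has_derivative: "(logloss has_real_derivative - logloss_slope u) (at u)"
proof -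
  have "0 < 1 + exp (- u)"
    by (simp add: add_pos_pos)
  then show ?thesis
    unfolding logloss_def logloss_slope_def
    by (auto intro!: derivative_eq_intros simp: field_simps)
qed

lemma logloss_slope_nonneg: "0 \<le> logloss_slope u"
  unfolding logloss_slope_def by simp

lemma logloss_slope_le_one: "logloss_slope u \<le> 1"
  unfolding logloss_slope_def by (simp add: add_pos_pos)

lemma logloss_slope_le_exp: "logloss_slope u \<le> exp (- u)"
  unfolding logloss_slope_def by (simp add: add_pos_pos divide_le_eq mult_le_cancel_left1)

lemma deriv_logloss_coord:
  assumes "r \<in> {1..m}" "s \<in> {1..P}" "k \<in> {1..d}"
    and "\<And>p. p \<in> {1..P} \<Longrightarrow> p \<noteq> s \<Longrightarrow> X p k = 0"
  shows "deriv (\<lambda>z. logloss (y * fW m P d (W(r := (W r)(k := z))) X)) (W r k)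
    = - logloss_slope (y * fW m P d W X) * (y * (3 * (ip d (W r) (X s)) ^ 2 * X s k))"
proof -
  let ?I = "ip d (W r) (X s)"
  have "((\<lambda>z. y * (fW m P d W X + (?I + (z - W r k) * X s k) ^ 3 - ?I ^ 3)) has_real_derivative
      y * (3 * ?I ^ 2 * X s k)) (at (W r k))"
    by (auto intro!: derivative_eq_intros)
  then have chain: "((\<lambda>z. logloss (y * (fW m P d W X + (?I + (z - W r k) * X s k) ^ 3 - ?I ^ 3)))
      has_real_derivative - logloss_slope (y * fW m P d W X) * (y * (3 * ?I ^ 2 * X s k))) (at (W r k))"
    by (rule DERIV_chain2[rotated]) (simp add: logloss_has_derivative)
  have fW_update: "(\<lambda>z. logloss (y * fW m P d (W(r := (W r)(k := z))) X))
      = (\<lambda>z. logloss (y * (fW m P d W X + (?I + (z - W r k) * X s k) ^ 3 - ?I ^ 3)))"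
    using fW_fun_upd_coord[of r m s P k d X W, OF assms] by simp
  show ?thesis
    unfolding fW_update by (rule DERIV_imp_deriv[OF chain])
qed

lemma logloss_slope_le_inverse_square:
  assumes "0 < T" "2 * ln T \<le> u"
  shows "logloss_slope u \<le> 1 / T ^ 2"
proof -
  have "logloss_slope u \<le> exp (- (2 * ln T))"
    using logloss_slope_le_exp[of u] assms(2) by (meson exp_le_cancel_iff neg_le_iff_le order_trans)
  also have "\<dots> = 1 / T ^ 2"
    using assms(1) by (simp add: exp_minus exp_of_nat_mult[of 2, simplified] inverse_eq_divide)
  finally show ?thesis .
qed

section \<open>Adversarial examples\<close>

lemma adv_feasible_noise_patch:
  assumes "adv_feasible P d eps X s X'" "p \<in> {1..P}" "p \<noteq> s" "j \<in> {1..d}"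
  shows "X' p j = X p j"
  using assms unfolding adv_feasible_def by force

lemma adv_feasible_signal_patch:
  assumes "adv_feasible P d eps X s X'" "s \<in> {1..P}" "k \<in> {1..d}"
    and "\<And>j. j \<in> {1..d} \<Longrightarrow> X s j = b * evec k j"
  obtains b' where "\<bar>b' - b\<bar> \<le> eps" "\<And>j. j \<in> {1..d} \<Longrightarrow> X' s j = b' * evec k j"
proof -
  obtain c where diff: "\<forall>p\<in>{1..P}. \<forall>j\<in>{1..d}. X' p j - X p j = (if p = s then c * X p j else 0)"
    and close: "\<forall>p\<in>{1..P}. \<forall>j\<in>{1..d}. \<bar>X' p j - X p j\<bar> \<le> eps"
    using assms(1) unfolding adv_feasible_def by blast
  have c: "\<And>j. j \<in> {1..d} \<Longrightarrow> X' s j - X s j = c * X s j"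
    using diff assms(2) by simp
  have bound: "\<And>j. j \<in> {1..d} \<Longrightarrow> \<bar>X' s j - X s j\<bar> \<le> eps"
    using close assms(2) by blast
  have "X s k = b"
    using assms(3,4) by (simp add: evec_def)
  then have "\<bar>(1 + c) * b - b\<bar> \<le> eps"
    using c[OF assms(3)] bound[OF assms(3)] by (simp add: algebra_simps)
  moreover have "X' s j = ((1 + c) * b) * evec k j" if "j \<in> {1..d}" for j
    using c[OF that] assms(4)[OF that] by (simp add: algebra_simps)
  ultimately show ?thesis
    using that by blast
qed

lemma adv_feasible_labeled_signal:
  assumes "adv_feasible P d eps X s X'" "s \<in> {1..P}" "1 \<le> d" "y = 1 \<or> y = -1"
    and "\<And>j. j \<in> {1..d} \<Longrightarrow> X s j = alpha * y * evec 1 j"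
  shows "\<bar>X' s 1 * y - alpha\<bar> \<le> eps" "\<And>j. j \<in> {1..d} \<Longrightarrow> X' s j = (X' s 1 * y * y) * evec 1 j"
proof -
  obtain b where b: "\<bar>b - alpha * y\<bar> \<le> eps" "\<And>j. j \<in> {1..d} \<Longrightarrow> X' s j = b * evec 1 j"
    using adv_feasible_signal_patch[OF assms(1,2), of 1 "alpha * y"] assms(3,5) by auto
  have "X' s 1 = b"
    using b(2)[of 1] assms(3) by (simp add: evec_def)
  then show "\<bar>X' s 1 * y - alpha\<bar> \<le> eps" "\<And>j. j \<in> {1..d} \<Longrightarrow> X' s j = (X' s 1 * y * y) * evec 1 j"
    using b assms(4) by (auto simp: abs_minus_commute)
qed

lemma train_step_signal_coord:
  fixes a :: "nat \<Rightarrow> real"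
  assumes "2 \<le> d" "r \<in> {1..m}" "SL \<subseteq> {1..N}"
    and s: "\<And>i. i \<in> {1..N} \<Longrightarrow> s i \<in> {1..P}"
    and y: "\<And>i. i \<in> SL \<Longrightarrow> y i = 1 \<or> y i = -1"
    and signal: "\<And>i j. i \<in> SL \<Longrightarrow> j \<in> {1..d} \<Longrightarrow> Xa i (s i) j = (a i * y i) * evec 1 j"
    and off_signal: "\<And>i p. i \<in> {1..N} \<Longrightarrow> p \<in> {1..P} \<Longrightarrow> p \<noteq> s i \<or> i \<notin> SL \<Longrightarrow> Xa i p 1 = 0"
  shows "train_step N m P d eta y Xa W r 1 = W r 1 + eta / real N *
    (\<Sum>i\<in>SL. logloss_slope (y i * fW m P d W (Xa i)) * (3 * a i ^ 3 * (W r 1) ^ 2))"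
proof -
  let ?g = "\<lambda>i. logloss_slope (y i * fW m P d W (Xa i)) * (3 * a i ^ 3 * (W r 1) ^ 2)"
  have one: "(1::nat) \<in> {1..d}"
    using assms(1) by simp
  have "deriv (\<lambda>z. logloss (y i * fW m P d (W(r := (W r)(1 := z))) (Xa i))) (W r 1)
      = (if i \<in> SL then - ?g i else 0)" if i: "i \<in> {1..N}" for i
  proof -
    have D: "deriv (\<lambda>z. logloss (y i * fW m P d (W(r := (W r)(1 := z))) (Xa i))) (W r 1)
      = - logloss_slope (y i * fW m P d W (Xa i)) * (y i * (3 * (ip d (W r) (Xa i (s i))) ^ 2 * Xa i (s i) 1))"
      using off_signal[OF i] by (intro deriv_logloss_coord assms(2) s[OF i] one) auto
    show ?thesis
    proof (cases "i \<in> SL")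
      case True
      have "ip d (W r) (Xa i (s i)) = W r 1 * (a i * y i)"
        using signal[OF True] by (intro ip_scaled_evec one) auto
      moreover have "Xa i (s i) 1 = a i * y i"
        using signal[OF True one] by (simp add: evec_def)
      ultimately show ?thesis
        unfolding D using True y[OF True] by (auto simp: power2_eq_square power3_eq_cube)
    next
      case False
      then show ?thesis
        unfolding D using off_signal[OF i s[OF i]] by simp
    qed
  qed
  then have "(\<Sum>i=1..N. deriv (\<lambda>z. logloss (y i * fW m P d (W(r := (W r)(1 := z))) (Xa i))) (W r 1))
      = (\<Sum>i=1..N. if i \<in> SL then - ?g i else 0)"
    by (rule sum.cong[OF refl])
  also have "\<dots> = - (\<Sum>i\<in>SL. ?g i)"
    using assms(3) by (simp add: sum.inter_restrict[symmetric] Int_absorb1 sum_negf)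
  finally show ?thesis
    using assms(1) by (simp add: train_step_def)
qed

lemma margin_ge_signal_minus_noise:
  assumes "s \<in> {1..P}" "1 \<le> d" "y = 1 \<or> y = -1"
    and signal: "\<And>j. j \<in> {1..d} \<Longrightarrow> X s j = (a * y) * evec 1 j"
    and noise: "\<And>r p. r \<in> {1..m} \<Longrightarrow> p \<in> {1..P} \<Longrightarrow> p \<noteq> s \<Longrightarrow> \<bar>ip d (W r) (X p)\<bar> \<le> B"
    and "0 \<le> B"
  shows "(\<Sum>r=1..m. a ^ 3 * (W r 1) ^ 3) - real m * real P * B ^ 3 \<le> y * fW m P d W X"
proof -
  define R where "R r = (\<Sum>p\<in>{1..P}-{s}. (ip d (W r) (X p)) ^ 3)" for r
  have "ip d (W r) (X s) = W r 1 * (a * y)" for r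
    using assms(2) by (intro ip_scaled_evec) (auto simp: signal)
  then have "(\<Sum>p=1..P. (ip d (W r) (X p)) ^ 3) = (W r 1 * (a * y)) ^ 3 + R r" for r
    unfolding R_def using assms(1) by (simp add: sum.remove)
  moreover have "y * (c * (a * y)) ^ 3 = a ^ 3 * c ^ 3" for c
    using assms(3) by (auto simp: power_mult_distrib)
  ultimately have margin: "y * fW m P d W X = (\<Sum>r=1..m. a ^ 3 * (W r 1) ^ 3) + (\<Sum>r=1..m. y * R r)"
    unfolding fW_eq_sum_cubes by (simp add: sum_distrib_left distrib_left sum.distrib)
  have "\<bar>y * R r\<bar> \<le> real P * B ^ 3" if "r \<in> {1..m}" for r
  proof -
    have "\<bar>y * R r\<bar> = \<bar>R r\<bar>"
      using assms(3) by auto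
    also have "\<dots> \<le> (\<Sum>p\<in>{1..P}-{s}. \<bar>ip d (W r) (X p)\<bar> ^ 3)"
      unfolding R_def power_abs[symmetric] by (rule sum_abs)
    also have "\<dots> \<le> (\<Sum>p\<in>{1..P}-{s}. B ^ 3)"
      using noise[OF that] by (intro sum_mono power_mono) auto
    also have "\<dots> \<le> real P * B ^ 3"
      using assms(1,6) by (auto intro!: mult_right_mono simp: card_Diff_singleton)
    finally show ?thesis .
  qed
  then have "(\<Sum>r=1..m. \<bar>y * R r\<bar>) \<le> real m * (real P * B ^ 3)"
    using sum_bounded_above[of "{1..m}" "\<lambda>r. \<bar>y * R r\<bar>"] by simp
  then have "\<bar>\<Sum>r=1..m. y * R r\<bar> \<le> real m * (real P * B ^ 3)"
    by (rule order_trans[OF sum_abs])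
  then show ?thesis
    unfolding margin by (simp add: abs_le_iff)
qed

lemma data_supportD:
  assumes "data_support N P d alpha SL SU y s X"
  shows "SL \<subseteq> {1..N}"
    and "i \<in> {1..N} \<Longrightarrow> y i = 1 \<or> y i = -1"
    and "i \<in> {1..N} \<Longrightarrow> s i \<in> {1..P}"
    and "i \<in> SL \<Longrightarrow> j \<in> {1..d} \<Longrightarrow> X i (s i) j = alpha * y i * evec 1 j"
    and "i \<in> {1..N} \<Longrightarrow> i \<notin> SL \<Longrightarrow> j \<in> {1..d} \<Longrightarrow> X i (s i) j = alpha * y i * evec d j"
    and "i \<in> {1..N} \<Longrightarrow> p \<in> {1..P} \<Longrightarrow> p \<noteq> s i \<Longrightarrow> X i p 1 = 0"
proof -
  note D = assms[unfolded data_support_def]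
  show SL: "SL \<subseteq> {1..N}"
    using D by blast
  show "i \<in> SL \<Longrightarrow> j \<in> {1..d} \<Longrightarrow> X i (s i) j = alpha * y i * evec 1 j"
    using D SL by (auto simp: subset_eq)
qed (use assms in \<open>auto simp: data_support_def\<close>)

lemma adv_example_coord1_zero:
  assumes data: "data_support N P d alpha SL SU y s X" and "2 \<le> d" "i \<in> {1..N}"
    and feasible: "adv_feasible P d eps (X i) (s i) X'" and "p \<in> {1..P}" "p \<noteq> s i \<or> i \<notin> SL"
  shows "X' p 1 = 0"
proof (cases "p = s i")
  case True
  have "\<And>j. j \<in> {1..d} \<Longrightarrow> X i (s i) j = (alpha * y i) * evec d j"
    using data_supportD(5)[OF data] assms(3,6) True by auto
  moreover have "d \<in> {1..d}"
    using assms(2) by simp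
  ultimately obtain b where "\<bar>b - alpha * y i\<bar> \<le> eps" "\<And>j. j \<in> {1..d} \<Longrightarrow> X' (s i) j = b * evec d j"
    using adv_feasible_signal_patch[OF feasible data_supportD(3)[OF data assms(3)]] by blast
  then show ?thesis
    using True assms(2) by (simp add: evec_def)
next
  case False
  then show ?thesis
    using adv_feasible_noise_patch[OF feasible assms(5) False, of 1] data_supportD(6)[OF data assms(3,5)]
      assms(2) by simp
qed

lemma adv_train_step_signal_coord:
  assumes data: "data_support N P d alpha SL SU y s X" and "2 \<le> d" "r \<in> {1..m}"
    and feasible: "\<And>i. i \<in> {1..N} \<Longrightarrow> adv_feasible P d eps (X i) (s i) (Xa i)"
  shows "train_step N m P d eta y Xa W r 1 = W r 1 + eta / real N *
    (\<Sum>i\<in>SL. logloss_slope (y i * fW m P d W (Xa i)) * (3 * (Xa i (s i) 1 * y i) ^ 3 * (W r 1) ^ 2))"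
proof (rule train_step_signal_coord[where a = "\<lambda>i. Xa i (s i) 1 * y i", OF assms(2,3) data_supportD(1,3)[OF data]])
  fix i j assume "i \<in> SL" "j \<in> {1..d}"
  have i: "i \<in> {1..N}"
    using data_supportD(1)[OF data] \<open>i \<in> SL\<close> by auto
  have "1 \<le> d"
    using assms(2) by simp
  note signal = adv_feasible_labeled_signal(2)[OF feasible[OF i] data_supportD(3)[OF data i] this
      data_supportD(2)[OF data i] data_supportD(4)[OF data \<open>i \<in> SL\<close>]]
  show "Xa i (s i) j = (Xa i (s i) 1 * y i * y i) * evec 1 j"
    by (rule signal) (use \<open>j \<in> {1..d}\<close> in auto)
next
  show "y i = 1 \<or> y i = -1" if "i \<in> SL" for i
    using data_supportD(2)[OF data] data_supportD(1)[OF data] that by blast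
  show "Xa i p 1 = 0" if "i \<in> {1..N}" "p \<in> {1..P}" "p \<noteq> s i \<or> i \<notin> SL" for i p
    using adv_example_coord1_zero[OF data assms(2) that(1) feasible[OF that(1)] that(2,3)] .
qed

lemma adv_margin_lower_bound:
  assumes data: "data_support N P d alpha SL SU y s X" and "1 \<le> d" "i \<in> SL"
    and feasible: "adv_feasible P d eps (X i) (s i) X'"
    and noise: "\<And>r p. r \<in> {1..m} \<Longrightarrow> p \<in> {1..P} \<Longrightarrow> p \<noteq> s i \<Longrightarrow> \<bar>ip d (W r) (X i p)\<bar> \<le> B"
    and "0 \<le> B"
  shows "(\<Sum>r=1..m. (X' (s i) 1 * y i) ^ 3 * (W r 1) ^ 3) - real m * real P * B ^ 3 \<le> y i * fW m P d W X'"
proof (rule margin_ge_signal_minus_noise)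
  have i: "i \<in> {1..N}"
    using data_supportD(1)[OF data] assms(3) by auto
  show "s i \<in> {1..P}" "y i = 1 \<or> y i = -1"
    using data_supportD(2,3)[OF data i] by auto
  show "X' (s i) j = (X' (s i) 1 * y i * y i) * evec 1 j" if "j \<in> {1..d}" for j
    using adv_feasible_labeled_signal(2)[OF feasible \<open>s i \<in> {1..P}\<close> assms(2) \<open>y i = 1 \<or> y i = -1\<close>
        data_supportD(4)[OF data assms(3)]] that by blast
  show "\<bar>ip d (W r) (X' p)\<bar> \<le> B" if "r \<in> {1..m}" "p \<in> {1..P}" "p \<noteq> s i" for r p
  proof -
    have "ip d (W r) (X' p) = ip d (W r) (X i p)"
      by (rule ip_cong) (rule adv_feasible_noise_patch[OF feasible that(2,3)])
    then show ?thesis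
      using noise[OF that] by simp
  qed
qed (use assms(2,6) in auto)

lemma event_E_init_coord1:
  assumes "event_E N P d m sn s0 delta y s X W0" "1 \<le> d" "r \<in> {1..m}"
  shows "\<bar>W0 r 1\<bar> \<le> s0 * sqrt (2 * ln (16 * real m / delta))"
proof -
  have "ip d (W0 r) (evec 1) = W0 r 1 * 1"
    using assms(2) by (intro ip_scaled_evec) auto
  moreover have "\<bar>ip d (W0 r) (evec 1)\<bar> \<le> s0 * sqrt (2 * ln (16 * real m / delta))"
    using assms(1,3) unfolding event_E_def by blast
  ultimately show ?thesis
    by simp
qed

section \<open>Growth of the signal coordinate\<close>

lemma mean_increment_le:
  fixes g :: "nat \<Rightarrow> real"
  assumes "finite S" "card S \<le> N" "0 \<le> eta" "\<And>i. i \<in> S \<Longrightarrow> g i \<le> G" "0 \<le> G"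
  shows "eta / real N * (\<Sum>i\<in>S. g i) \<le> eta * G"
proof (cases "N = 0")
  case False
  have "(\<Sum>i\<in>S. g i) \<le> real (card S) * G"
    using sum_bounded_above[of S g G] assms(4) by simp
  also have "\<dots> \<le> real N * G"
    using assms(2,5) by (simp add: mult_right_mono)
  finally have "eta * (\<Sum>i\<in>S. g i) / real N \<le> eta * (real N * G) / real N"
    using assms(3) by (intro divide_right_mono mult_left_mono) auto
  then show ?thesis
    using False by simp
qed (use assms in simp)

lemma sum_cubes_lower_bound:
  fixes f :: "nat \<Rightarrow> real"
  assumes "finite R" "r \<in> R" "\<And>r'. r' \<in> R \<Longrightarrow> - c \<le> f r'" "0 \<le> c" "0 \<le> b"
  shows "b * f r ^ 3 - real (card R) * (b * c ^ 3) \<le> (\<Sum>r'\<in>R. b * f r' ^ 3)"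
proof -
  have "- (b * c ^ 3) \<le> b * f r' ^ 3" if "r' \<in> R" for r'
  proof -
    have "(- c) ^ 3 \<le> f r' ^ 3"
      using power_mono_odd[of 3, OF _ assms(3)[OF that]] by simp
    then show ?thesis
      using assms(5) mult_left_mono by fastforce
  qed
  then have "- (real (card (R - {r})) * (b * c ^ 3)) \<le> (\<Sum>r'\<in>R - {r}. b * f r' ^ 3)"
    using sum_bounded_below[of "R - {r}" "- (b * c ^ 3)"] by simp
  moreover have "real (card (R - {r})) * (b * c ^ 3) \<le> real (card R) * (b * c ^ 3)"
    using assms by (intro mult_right_mono) (auto simp: card_mono)
  ultimately show ?thesis
    using assms(1,2) by (simp add: sum.remove)
qed

lemma signal_increment_le:
  fixes a z :: "nat \<Rightarrow> real"
  assumes "finite S" "card S \<le> N" "0 \<le> eta" "0 < alpha" "0 \<le> \<sigma>"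
    and a: "\<And>i. i \<in> S \<Longrightarrow> 0 \<le> a i \<and> a i \<le> 6/5 * alpha"
    and slope: "\<And>i. i \<in> S \<Longrightarrow> logloss_slope (z i) \<le> \<sigma>"
  shows "eta / real N * (\<Sum>i\<in>S. logloss_slope (z i) * (3 * a i ^ 3 * w ^ 2))
    \<le> eta * (\<sigma> * (6 * alpha ^ 3 * w ^ 2))"
proof (rule mean_increment_le)
  fix i assume "i \<in> S"
  have "3 * a i ^ 3 \<le> 3 * (6/5 * alpha) ^ 3"
    using a[OF \<open>i \<in> S\<close>] by (intro mult_left_mono power_mono) auto
  also have "\<dots> \<le> 6 * alpha ^ 3"
    unfolding power_mult_distrib using assms(4) by (simp add: power3_eq_cube)
  finally have "3 * a i ^ 3 * w ^ 2 \<le> 6 * alpha ^ 3 * w ^ 2"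
    by (rule mult_right_mono) simp
  then show "logloss_slope (z i) * (3 * a i ^ 3 * w ^ 2) \<le> \<sigma> * (6 * alpha ^ 3 * w ^ 2)"
    using a[OF \<open>i \<in> S\<close>] by (intro mult_mono[OF slope[OF \<open>i \<in> S\<close>] _ assms(5)]) auto
qed (use assms in auto)

lemma large_weight_margin:
  fixes alpha a l w z T :: real
  assumes "4/5 * alpha \<le> a" "2 * (l / alpha) < w" "l ^ 3 = ln T" "1 \<le> l" "0 < alpha"
    and "a ^ 3 * w ^ 3 - 1/2 \<le> z"
  shows "2 * ln T \<le> z"
proof -
  have "(4/5 * alpha) ^ 3 * (2 * (l / alpha)) ^ 3 \<le> a ^ 3 * w ^ 3"
    using assms(1,2,4,5) by (intro mult_mono power_mono) auto
  moreover have "(4/5 * alpha) ^ 3 * (2 * (l / alpha)) ^ 3 = 512/125 * l ^ 3"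
    using assms(5) by (simp add: power3_eq_cube field_simps)
  ultimately show ?thesis
    using assms(3,4,6) one_le_power[of l 3] by linarith
qed

lemma signal_step_bounds:
  fixes a z :: "nat \<Rightarrow> real" and T :: real
  assumes S: "finite S" "card S \<le> N"
    and a: "\<And>i. i \<in> S \<Longrightarrow> 4/5 * alpha \<le> a i \<and> a i \<le> 6/5 * alpha"
    and margin: "\<And>i. i \<in> S \<Longrightarrow> a i ^ 3 * w ^ 3 - 1/2 \<le> z i"
    and w: "- A \<le> w" "w \<le> 3 * A"
    and A: "A = l / alpha" "l ^ 3 = ln T" "1 \<le> l" "0 < alpha" "1 \<le> T"
    and eta: "0 \<le> eta" "108 * eta * alpha ^ 2 * l \<le> 1"
  defines "inc \<equiv> eta / real N * (\<Sum>i\<in>S. logloss_slope (z i) * (3 * a i ^ 3 * w ^ 2))"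
  shows "0 \<le> inc" and "w \<le> 2 * A \<Longrightarrow> inc \<le> A / 2" and "2 * A < w \<Longrightarrow> inc \<le> A / (2 * T)"
proof -
  have A_pos: "0 < A"
    using A by simp
  have a': "0 \<le> a i \<and> a i \<le> 6/5 * alpha" if "i \<in> S" for i
    using a[OF that] A(4) by auto
  have eta_A: "eta * (6 * alpha ^ 3 * A ^ 2) = 6 * (eta * alpha ^ 2 * l) * A"
    using A(1,4) by (simp add: power2_eq_square power3_eq_cube)
  show "0 \<le> inc"
    unfolding inc_def using a' eta(1)
    by (intro mult_nonneg_nonneg sum_nonneg divide_nonneg_nonneg logloss_slope_nonneg) auto
  show "inc \<le> A / 2" if "w \<le> 2 * A"
  proof -
    have "inc \<le> eta * (1 * (6 * alpha ^ 3 * w ^ 2))"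
      unfolding inc_def using S eta(1) A(4) a' logloss_slope_le_one by (intro signal_increment_le) auto
    also have "\<dots> \<le> eta * (6 * alpha ^ 3 * (2 * A) ^ 2)"
      using that w(1) A_pos A(4) eta(1) abs_le_square_iff[of w "2 * A"]
      by (intro mult_left_mono) auto
    also have "\<dots> = 24 * (eta * alpha ^ 2 * l) * A"
      using eta_A by (simp add: power_mult_distrib)
    also have "\<dots> \<le> A / 2"
      using eta A_pos by (simp add: field_simps)
    finally show ?thesis .
  qed
  show "inc \<le> A / (2 * T)" if "2 * A < w"
  proof -
    have "logloss_slope (z i) \<le> 1 / T ^ 2" if "i \<in> S" for i
      using large_weight_margin[of alpha "a i" l w T "z i"] a[OF that] margin[OF that] \<open>2 * A < w\<close> A
      by (intro logloss_slope_le_inverse_square) auto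
    then have "inc \<le> eta * (1 / T ^ 2 * (6 * alpha ^ 3 * w ^ 2))"
      unfolding inc_def using S eta(1) A(4) a' by (intro signal_increment_le) auto
    also have "\<dots> \<le> eta * (1 / T ^ 2 * (6 * alpha ^ 3 * (3 * A) ^ 2))"
      using that w(2) A_pos A(4) eta(1) by (intro mult_left_mono power_mono) auto
    also have "\<dots> = (eta * alpha ^ 2 * l) * (54 * A) / T ^ 2"
      using A(1,4) by (simp add: power2_eq_square power3_eq_cube)
    also have "\<dots> \<le> (A / 2) / T ^ 2"
      using eta A_pos by (intro divide_right_mono) auto
    also have "\<dots> \<le> A / (2 * T)"
      using A(5) A_pos by (simp add: field_simps power2_eq_square)
    finally show ?thesis .
  qed
qed

lemma own_signal_margin:
  fixes w :: "nat \<Rightarrow> real"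
  assumes "finite R" "r \<in> R" "\<And>r'. r' \<in> R \<Longrightarrow> - \<iota> \<le> w r'" "0 \<le> \<iota>"
    and "0 \<le> a" "a \<le> 6/5 * alpha" "real (card R) * ((6/5 * alpha) ^ 3 * \<iota> ^ 3) \<le> 1/4"
    and "(\<Sum>r'\<in>R. a ^ 3 * w r' ^ 3) - 1/4 \<le> z"
  shows "a ^ 3 * w r ^ 3 - 1/2 \<le> z"
proof -
  have "real (card R) * (a ^ 3 * \<iota> ^ 3) \<le> real (card R) * ((6/5 * alpha) ^ 3 * \<iota> ^ 3)"
    using assms(4-6) by (intro mult_left_mono mult_right_mono power_mono) auto
  then show ?thesis
    using sum_cubes_lower_bound[where b = "a ^ 3", OF assms(1-4)] assms(5,7,8) by fastforce
qed

lemma signal_invariant_step: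
  fixes w w' a z :: "nat \<Rightarrow> real" and T :: real
  assumes R: "finite R" and S: "finite S" "card S \<le> N"
    and step: "\<And>r. r \<in> R \<Longrightarrow>
      w' r = w r + eta / real N * (\<Sum>i\<in>S. logloss_slope (z i) * (3 * a i ^ 3 * (w r) ^ 2))"
    and a: "\<And>i. i \<in> S \<Longrightarrow> 4/5 * alpha \<le> a i \<and> a i \<le> 6/5 * alpha"
    and margin: "\<And>i. i \<in> S \<Longrightarrow> (\<Sum>r\<in>R. a i ^ 3 * (w r) ^ 3) - 1/4 \<le> z i"
    and lower: "\<And>r. r \<in> R \<Longrightarrow> - \<iota> \<le> w r" and upper: "\<And>r. r \<in> R \<Longrightarrow> w r \<le> 5/2 * A + c"
    and \<iota>: "0 \<le> \<iota>" "\<iota> \<le> A / 2" "real (card R) * ((6/5 * alpha) ^ 3 * \<iota> ^ 3) \<le> 1/4"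
    and c: "0 \<le> c" "c \<le> A / 2"
    and A: "A = l / alpha" "l ^ 3 = ln T" "1 \<le> l" "0 < alpha" "1 \<le> T"
    and eta: "0 \<le> eta" "108 * eta * alpha ^ 2 * l \<le> 1"
    and r: "r \<in> R"
  shows "w r \<le> w' r" "w' r \<le> 5/2 * A + c + A / (2 * T)"
proof -
  have A_pos: "0 < A"
    using A by simp
  have w_range: "- A \<le> w r" "w r \<le> 3 * A"
    using lower[OF r] upper[OF r] \<iota>(2) c A_pos by linarith+
  have margin_r: "a i ^ 3 * w r ^ 3 - 1/2 \<le> z i" if "i \<in> S" for i
    using own_signal_margin[OF R r lower \<iota>(1) _ _ \<iota>(3) margin[OF that]] a[OF that] A(4) by auto
  define I where "I = eta / real N * (\<Sum>i\<in>S. logloss_slope (z i) * (3 * a i ^ 3 * (w r) ^ 2))"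
  note inc = signal_step_bounds[where a = a and z = z and w = "w r", OF S a margin_r w_range A eta,
      folded I_def]
  have w': "w' r = w r + I"
    unfolding I_def by (rule step[OF r])
  then show "w r \<le> w' r"
    using inc(1) by simp
  have "0 \<le> A / (2 * T)"
    using A_pos A(5) by simp
  then show "w' r \<le> 5/2 * A + c + A / (2 * T)"
    using inc(2,3) w' upper[OF r] c(1) by (cases "w r \<le> 2 * A") linarith+
qed

lemma signal_coordinate_bounded:
  fixes w a z :: "nat \<Rightarrow> nat \<Rightarrow> real" and T :: real
  assumes R: "finite R" and S: "finite S" "card S \<le> N"
    and step: "\<And>\<tau> r. \<tau> < t \<Longrightarrow> r \<in> R \<Longrightarrow> w (Suc \<tau>) r
      = w \<tau> r + eta / real N * (\<Sum>i\<in>S. logloss_slope (z \<tau> i) * (3 * a \<tau> i ^ 3 * (w \<tau> r) ^ 2))"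
    and a: "\<And>\<tau> i. \<tau> < t \<Longrightarrow> i \<in> S \<Longrightarrow> 4/5 * alpha \<le> a \<tau> i \<and> a \<tau> i \<le> 6/5 * alpha"
    and margin: "\<And>\<tau> i. \<tau> < t \<Longrightarrow> i \<in> S \<Longrightarrow> (\<Sum>r\<in>R. a \<tau> i ^ 3 * (w \<tau> r) ^ 3) - 1/4 \<le> z \<tau> i"
    and init: "\<And>r. r \<in> R \<Longrightarrow> \<bar>w 0 r\<bar> \<le> \<iota>"
    and \<iota>: "0 \<le> \<iota>" "\<iota> \<le> A / 2" "real (card R) * ((6/5 * alpha) ^ 3 * \<iota> ^ 3) \<le> 1/4"
    and A: "A = l / alpha" "l ^ 3 = ln T" "1 \<le> l" "0 < alpha" "1 \<le> T" "real t \<le> T"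
    and eta: "0 \<le> eta" "108 * eta * alpha ^ 2 * l \<le> 1"
    and "r \<in> R"
  shows "w t r \<le> 3 * A"
proof -
  have A_pos: "0 < A"
    using A by simp
  have time_term: "0 \<le> real \<tau> * A / (2 * T)" "real \<tau> * A / (2 * T) \<le> A / 2" if "\<tau> \<le> t" for \<tau>
    using that A(5,6) A_pos by (simp_all add: field_simps mult_right_mono)
  have "\<forall>r\<in>R. w 0 r \<le> w \<tau> r \<and> w \<tau> r \<le> 5/2 * A + real \<tau> * A / (2 * T)" if "\<tau> \<le> t" for \<tau>
    using that
  proof (induction \<tau>)
    case 0
    then show ?case
      using init \<iota>(2) A_pos by (force simp: abs_le_iff)
  next
    case (Suc \<tau>)
    then have "\<tau> < t" and IH: "\<forall>r\<in>R. w 0 r \<le> w \<tau> r \<and> w \<tau> r \<le> 5/2 * A + real \<tau> * A / (2 * T)"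
      by simp_all
    have "- \<iota> \<le> w \<tau> r" if "r \<in> R" for r
      using init[OF that] IH that by (force simp: abs_le_iff)
    note step_bounds = signal_invariant_step[where w = "w \<tau>" and w' = "w (Suc \<tau>)" and a = "a \<tau>" and z = "z \<tau>",
        OF R S step[OF \<open>\<tau> < t\<close>] a[OF \<open>\<tau> < t\<close>] margin[OF \<open>\<tau> < t\<close>] this _ \<iota>
          time_term[OF less_imp_le[OF \<open>\<tau> < t\<close>]] A(1-5) eta]
    have "real (Suc \<tau>) * A / (2 * T) = real \<tau> * A / (2 * T) + A / (2 * T)"
      by (simp add: add_divide_distrib distrib_right)
    then show ?case
      using step_bounds IH by fastforce
  qed
  then have "w t r \<le> 5/2 * A + real t * A / (2 * T)"
    using \<open>r \<in> R\<close> by blast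
  then show ?thesis
    using time_term(2)[of t] by linarith
qed

section \<open>Consequences of the standing conditions\<close>

lemma le_divide_of_less_one: "0 \<le> x \<Longrightarrow> 0 < delta \<Longrightarrow> delta < 1 \<Longrightarrow> x \<le> x / (delta :: real)"
  by (simp add: le_divide_eq mult_left_le)

lemma sqrt_le_self: "1 \<le> x \<Longrightarrow> sqrt x \<le> (x :: real)"
  using real_sqrt_le_mono[of x "x\<^sup>2"] by (simp add: power2_eq_square)

lemma one_le_ln: "3 \<le> x \<Longrightarrow> 1 \<le> ln (x :: real)"
  by (subst ln_ge_iff) (use exp_le in auto)

lemma le_inverse_mult_divide_iff:
  fixes x C u L :: real
  assumes "0 < C" "0 < L"
  shows "x \<le> inverse C * u / L \<longleftrightarrow> C * x * L \<le> u"
  using assms by (simp add: field_simps)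

lemma powr_two_thirds_cube:
  fixes x :: real
  assumes "0 < x"
  shows "(x powr (2/3)) ^ 3 = x\<^sup>2"
proof -
  have "(x powr (2/3)) ^ 3 = x powr (real 3 * (2/3))"
    using assms by (intro powr_power) simp
  also have "\<dots> = x\<^sup>2"
    using assms powr_realpow[of x 2] by simp
  finally show ?thesis .
qed

lemma ln_cube_le_sqrt:
  fixes x :: real
  assumes "1 \<le> x"
  shows "(ln x) ^ 3 \<le> 216 * sqrt x"
proof -
  define q where "q = x powr (1/6)"
  have "ln x = 6 * ln q"
    unfolding q_def using assms by (simp add: ln_powr)
  then have "ln x \<le> 6 * q"
    using ln_less_self[of q] assms unfolding q_def by simp
  then have "(ln x) ^ 3 \<le> (6 * q) ^ 3"
    using assms by (intro power_mono) auto
  also have "q ^ 3 = x powr (real 3 * (1/6))"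
    unfolding q_def using assms by (intro powr_power) simp
  then have "(6 * q) ^ 3 = 216 * sqrt x"
    using assms by (simp add: power_mult_distrib powr_half_sqrt)
  finally show ?thesis .
qed

lemma cube_of_sum_le: "0 \<le> x \<Longrightarrow> 0 \<le> y \<Longrightarrow> (x + y) ^ 3 \<le> 4 * (x ^ 3 + y ^ 3)" for x y :: real
proof -
  assume "0 \<le> x" "0 \<le> y"
  then have "0 \<le> 3 * (x + y) * (x - y)\<^sup>2"
    by simp
  moreover have "4 * (x ^ 3 + y ^ 3) - (x + y) ^ 3 = 3 * (x + y) * (x - y)\<^sup>2"
    by (simp add: power2_eq_square power3_eq_cube algebra_simps)
  ultimately show ?thesis
    by linarith
qed

locale standing_parameters =
  fixes C :: real and N P d m :: nat and alpha sn s0 eta eps Gam delta :: real and T :: nat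
    and pun :: real
  assumes conds: "standing_conds C N P d m alpha sn s0 eta eps Gam delta T pun"
    and C_large: "1000000 \<le> C"
begin

abbreviation "ln_TNmP \<equiv> ln (real T * real N * real m * real P / delta)"
abbreviation "ln_TdNmP \<equiv> ln (real T * real d * real N * real m * real P / delta)"

lemma positive: "0 < alpha" "0 < sn" "0 < s0" "0 < eta" "0 < delta" "delta < 1" "0 < C"
  using conds C_large unfolding standing_conds_def by auto

text \<open>The standing conditions do not require T, d, N, m to be positive. This follows from
  s0 > 0: if the logarithm dividing bound (iv) were not positive, that bound would force
  s0 <= 0 (recall x / 0 = 0 and ln 0 = 0 in HOL).\<close>

lemma ln_TdNmP_pos: "0 < ln_TdNmP"
proof (rule ccontr)
  let ?min = "min (1 / (real m powr (2/3) * real P powr (2/3) * sn * sqrt (real d)))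
    (min (1 / (alpha * real m powr (2/3))) (1 / (sn * (real m)\<^sup>2 * sqrt (real P) * real d)))"
  assume "\<not> 0 < ln_TdNmP"
  moreover have "0 \<le> ?min"
    using positive by simp
  ultimately have "inverse C * ?min / ln_TdNmP \<le> 0"
    using positive by (intro divide_nonneg_nonpos) auto
  then show False
    using conds positive unfolding standing_conds_def by linarith
qed

lemma sizes: "1 \<le> T" "1 \<le> d" "1 \<le> N" "1 \<le> m" "2 \<le> P"
proof -
  have "real T * real d * real N * real m * real P \<noteq> 0"
  proof
    assume "real T * real d * real N * real m * real P = 0"
    then have "ln_TdNmP = 0"
      by (simp only: div_0 ln_0)
    then show False
      using ln_TdNmP_pos by simp
  qed
  then show "1 \<le> T" "1 \<le> d" "1 \<le> N" "1 \<le> m"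
    by (auto simp: Suc_le_eq)
  show "2 \<le> P"
    using conds unfolding standing_conds_def by simp
qed

lemma s0_bounds:
  "C * s0 * ln_TdNmP * (real m powr (2/3) * real P powr (2/3) * sn * sqrt (real d)) \<le> 1"
  "C * s0 * ln_TdNmP * (alpha * real m powr (2/3)) \<le> 1"
  "C * s0 * ln_TdNmP * (sn * (real m)\<^sup>2 * sqrt (real P) * real d) \<le> 1"
proof -
  have "s0 \<le> inverse C * min (1 / (real m powr (2/3) * real P powr (2/3) * sn * sqrt (real d)))
    (min (1 / (alpha * real m powr (2/3))) (1 / (sn * (real m)\<^sup>2 * sqrt (real P) * real d)))
    / ln_TdNmP"
    using conds unfolding standing_conds_def by blast
  then have "C * s0 * ln_TdNmP \<le> min (1 / (real m powr (2/3) * real P powr (2/3) * sn * sqrt (real d)))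
    (min (1 / (alpha * real m powr (2/3))) (1 / (sn * (real m)\<^sup>2 * sqrt (real P) * real d)))"
    by (simp only: le_inverse_mult_divide_iff[OF positive(7) ln_TdNmP_pos])
  moreover have "0 < real m" "0 < real P" "0 < real d"
    using sizes by auto
  ultimately show "C * s0 * ln_TdNmP * (real m powr (2/3) * real P powr (2/3) * sn * sqrt (real d)) \<le> 1"
    "C * s0 * ln_TdNmP * (alpha * real m powr (2/3)) \<le> 1"
    "C * s0 * ln_TdNmP * (sn * (real m)\<^sup>2 * sqrt (real P) * real d) \<le> 1"
    using positive by (simp_all add: le_divide_eq)
qed

lemma ln_TNmP_bounds: "1/2 \<le> ln_TNmP" "ln_TNmP \<le> ln_TdNmP"
proof -
  have "1 \<le> real T * real N * real m"
    using sizes by (intro mult_ge1_I) auto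
  then have "1 * 2 \<le> real T * real N * real m * real P"
    using sizes by (intro mult_mono) auto
  also have "\<dots> \<le> real T * real N * real m * real P / delta"
    using positive by (intro le_divide_of_less_one) auto
  finally have two_le: "2 \<le> real T * real N * real m * real P / delta"
    by simp
  then have "ln 2 \<le> ln_TNmP"
    by simp
  then show "1/2 \<le> ln_TNmP"
    using ln2_ge_two_thirds by linarith
  have "real T * real N * real m * real P \<le> real T * real d * real N * real m * real P"
    using sizes by (simp add: mult_ac)
  then have "real T * real N * real m * real P / delta \<le> real T * real d * real N * real m * real P / delta"
    using positive by (intro divide_right_mono) auto
  then show "ln_TNmP \<le> ln_TdNmP"
    by (rule ln_mono) (use two_le in auto)
qed

lemma eta_bounds: "C * eta * ln_TNmP * (sn\<^sup>2 * real d) \<le> 1" "C * eta * ln_TNmP * alpha\<^sup>2 \<le> 1"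
proof -
  have pos: "0 < ln_TNmP"
    using ln_TNmP_bounds by linarith
  have "eta \<le> inverse C * min (1 / (alpha ^ 3 * s0)) (min (1 / (sn\<^sup>2 * real d)) (1 / alpha\<^sup>2))
    / ln_TNmP"
    using conds unfolding standing_conds_def by (simp add: mult.assoc)
  then have "C * eta * ln_TNmP \<le> min (1 / (alpha ^ 3 * s0)) (min (1 / (sn\<^sup>2 * real d)) (1 / alpha\<^sup>2))"
    by (simp only: le_inverse_mult_divide_iff[OF positive(7) pos])
  moreover have "0 < real d"
    using sizes by simp
  ultimately show "C * eta * ln_TNmP * (sn\<^sup>2 * real d) \<le> 1" "C * eta * ln_TNmP * alpha\<^sup>2 \<le> 1"
    using positive by (simp_all add: le_divide_eq)
qed

lemma T_large: "C ^ 3 / 4 \<le> real T"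
proof -
  define Q where "Q = eta * s0 * sn ^ 3 * (real d * sqrt (real d))"
  define K where "K = ln_TNmP * ln_TdNmP * ((real m)\<^sup>2 * sqrt (real P) * sqrt (real d))"
  have d: "1 \<le> real d" "sqrt (real d) * sqrt (real d) = real d"
    using sizes by auto
  have Q_pos: "0 < Q"
    unfolding Q_def using positive d by simp
  have "1/2 * (1/2) \<le> ln_TNmP * ln_TdNmP"
    using ln_TNmP_bounds by (intro mult_mono) auto
  moreover have "1 \<le> (real m)\<^sup>2 * sqrt (real P) * sqrt (real d)"
    using sizes by (intro mult_ge1_I) auto
  ultimately have "1/4 * 1 \<le> K"
    unfolding K_def by (intro mult_mono) auto
  have "(C * eta * ln_TNmP * (sn\<^sup>2 * real d)) * (C * s0 * ln_TdNmP * (sn * (real m)\<^sup>2 * sqrt (real P) * real d)) \<le> 1 * 1"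
    using eta_bounds(1) s0_bounds(3) positive ln_TNmP_bounds ln_TdNmP_pos
    by (intro mult_mono) auto
  also have "(C * eta * ln_TNmP * (sn\<^sup>2 * real d)) * (C * s0 * ln_TdNmP * (sn * (real m)\<^sup>2 * sqrt (real P) * real d))
      = C\<^sup>2 * Q * K"
    unfolding Q_def K_def using d(2) by (simp add: power2_eq_square power3_eq_cube algebra_simps)
  moreover have "C\<^sup>2 * Q * (1/4) \<le> C\<^sup>2 * Q * K"
    using \<open>1/4 * 1 \<le> K\<close> Q_pos by (intro mult_left_mono) auto
  ultimately have "C\<^sup>2 * Q * (1/4) \<le> 1"
    by linarith
  then have "C ^ 3 / 4 \<le> C * 1 / Q"
    using Q_pos positive by (simp add: field_simps power2_eq_square power3_eq_cube)
  also have "\<dots> \<le> C * real N / Q"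
    using sizes positive Q_pos by (intro divide_right_mono mult_left_mono) auto
  also have "\<dots> \<le> real T"
  proof -
    have "real d powr (3/2) = real d powr (1 + 1/2)"
      by simp
    also have "\<dots> = real d * sqrt (real d)"
      using d(1) by (simp only: powr_add powr_half_sqrt) simp
    finally show ?thesis
      using conds unfolding standing_conds_def Q_def by simp
  qed
  finally show ?thesis .
qed

lemma ln_divide_delta_mono: "0 < x \<Longrightarrow> x \<le> y \<Longrightarrow> ln (x / delta) \<le> ln (y / delta)"
  using positive by (intro ln_mono divide_right_mono) auto

lemma ln_le_ln_divide_delta: "0 < x \<Longrightarrow> ln x \<le> ln (x / delta)"
  using positive by (intro ln_mono le_divide_of_less_one) auto

lemma one_le_ln_divide_delta: "3 \<le> x \<Longrightarrow> 1 \<le> ln (x / delta)"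
  using ln_le_ln_divide_delta[of x] one_le_ln[of x] by simp

lemma T_ge_16: "16 \<le> real T"
proof -
  have "(100::real) ^ 3 \<le> C ^ 3"
    using C_large by (intro power_mono) auto
  then show ?thesis
    using T_large by simp
qed

lemma ln_T_bounds: "1 \<le> ln (real T)" "ln (real T) \<le> ln_TNmP"
proof -
  show "1 \<le> ln (real T)"
    using T_ge_16 by (intro one_le_ln) simp
  have "1 \<le> real N * real m * real P"
    using sizes by (intro mult_ge1_I) auto
  from mult_left_mono[OF this, of "real T"]
  have "real T \<le> real T * real N * real m * real P"
    by (simp add: mult.assoc)
  moreover have "ln (real T) \<le> ln (real T / delta)"
    using T_ge_16 by (intro ln_le_ln_divide_delta) simp
  ultimately show "ln (real T) \<le> ln_TNmP"
    using ln_divide_delta_mono[of "real T"] T_ge_16 by fastforce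
qed

lemma one_le_ln_TNmP: "1 \<le> ln_TNmP"
  using ln_T_bounds by linarith

lemma d_large: "C \<le> real d"
proof -
  have "C * 1 \<le> C * ((real m)\<^sup>2 * (real P)\<^sup>2 * (real N)\<^sup>2 * ln_TNmP ^ 4)"
    using sizes one_le_ln_TNmP positive
    by (intro mult_left_mono mult_ge1_I one_le_power) (auto simp del: of_nat_power)
  moreover have "C * (real m)\<^sup>2 * (real P)\<^sup>2 * (real N)\<^sup>2 * ln_TNmP ^ 4 \<le> real d"
    using conds unfolding standing_conds_def by blast
  ultimately show ?thesis
    by (simp add: mult.assoc)
qed

lemma eps_le: "eps \<le> alpha / 5"
proof -
  have "eps < inverse C * min alpha (1 / (real m * s0 * real d))"
    using conds unfolding standing_conds_def by blast
  also have "\<dots> \<le> inverse C * alpha"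
    using positive by (intro mult_left_mono) auto
  also have "\<dots> \<le> alpha / 5"
    using C_large positive by (simp add: field_simps)
  finally show ?thesis
    by simp
qed

abbreviation "cbrt_ln_T \<equiv> ln (real T) powr (1/3)"

lemma cbrt_ln_T: "cbrt_ln_T ^ 3 = ln (real T)" "1 \<le> cbrt_ln_T" "cbrt_ln_T \<le> ln (real T)"
proof -
  show "cbrt_ln_T ^ 3 = ln (real T)"
    using ln_T_bounds(1) by (simp add: powr_power)
  show "1 \<le> cbrt_ln_T"
    using ln_T_bounds(1) by (intro ge_one_powr_ge_zero) auto
  have "ln (real T) powr (1/3) \<le> ln (real T) powr 1"
    using ln_T_bounds(1) by (intro powr_mono) auto
  then show "cbrt_ln_T \<le> ln (real T)"
    using ln_T_bounds(1) by simp
qed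

lemma eta_small: "108 * eta * alpha\<^sup>2 * cbrt_ln_T \<le> 1"
proof -
  have "108 * eta * alpha\<^sup>2 * cbrt_ln_T \<le> C * eta * alpha\<^sup>2 * ln_TNmP"
    using C_large positive cbrt_ln_T(2,3) ln_T_bounds(2)
    by (intro mult_mono) auto
  then show ?thesis
    using eta_bounds(2) by (simp add: mult_ac)
qed

lemma ln_16m_bounds: "1 \<le> ln (16 * real m / delta)" "ln (16 * real m / delta) \<le> ln_TdNmP"
proof -
  show "1 \<le> ln (16 * real m / delta)"
    using sizes by (intro one_le_ln_divide_delta) simp
  have "16 * real m * 1 \<le> real T * real m * (real d * real N * real P)"
    using T_ge_16 sizes by (intro mult_mono mult_ge1_I) auto
  then show "ln (16 * real m / delta) \<le> ln_TdNmP"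
    using sizes ln_divide_delta_mono[of "16 * real m"] by (simp add: mult_ac)
qed

lemma init_scale_bound: "s0 * sqrt (2 * ln (16 * real m / delta)) \<le> 2 / (C * alpha * real m powr (2/3))"
proof -
  have "sqrt (2 * ln (16 * real m / delta)) \<le> 2 * ln_TdNmP"
    using sqrt_le_self[of "2 * ln (16 * real m / delta)"] ln_16m_bounds by simp
  then have "s0 * sqrt (2 * ln (16 * real m / delta)) \<le> 2 * (s0 * ln_TdNmP)"
    using positive by (simp add: mult_left_mono)
  also have "\<dots> \<le> 2 / (C * alpha * real m powr (2/3))"
    using s0_bounds(2) positive sizes by (simp add: field_simps)
  finally show ?thesis .
qed

lemma init_small:
  defines "\<iota> \<equiv> s0 * sqrt (2 * ln (16 * real m / delta))"
  shows "0 \<le> \<iota>" "\<iota> \<le> cbrt_ln_T / alpha / 2" "real m * ((6/5 * alpha) ^ 3 * \<iota> ^ 3) \<le> 1/4"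
proof -
  define mp where "mp = real m powr (2/3)"
  have mp: "1 \<le> mp" "mp ^ 3 = (real m)\<^sup>2"
    unfolding mp_def using sizes by (auto intro: ge_one_powr_ge_zero powr_two_thirds_cube)
  show "0 \<le> \<iota>"
    unfolding \<iota>_def using positive ln_16m_bounds by simp
  have \<iota>_le: "\<iota> \<le> 2 / (C * alpha * mp)"
    unfolding \<iota>_def mp_def by (rule init_scale_bound)
  also have "\<dots> \<le> 2 / (C * alpha)"
    using positive mp by (intro divide_left_mono) auto
  also have "\<dots> \<le> cbrt_ln_T / alpha / 2"
    using positive mult_mono[of 4 C 1 cbrt_ln_T] C_large cbrt_ln_T(2) by (simp add: field_simps)
  finally show "\<iota> \<le> cbrt_ln_T / alpha / 2" .
  have "\<iota> ^ 3 \<le> (2 / (C * alpha * mp)) ^ 3"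
    using \<iota>_le \<open>0 \<le> \<iota>\<close> by (intro power_mono) auto
  then have "real m * ((6/5 * alpha) ^ 3 * \<iota> ^ 3) \<le> real m * ((6/5 * alpha) ^ 3 * (2 / (C * alpha * mp)) ^ 3)"
    using positive by (intro mult_left_mono) auto
  also have "\<dots> = 1728 / (125 * C ^ 3 * real m)"
    unfolding power_divide power_mult_distrib mp(2) using positive sizes
    by (simp add: field_simps power2_eq_square)
  also have "\<dots> \<le> 1728 / (125 * 100 ^ 3 * 1)"
    using C_large sizes by (intro divide_left_mono mult_mono power_mono) auto
  also have "\<dots> \<le> 1/4"
    by simp
  finally show "real m * ((6/5 * alpha) ^ 3 * \<iota> ^ 3) \<le> 1/4" .
qed

abbreviation "ln_16NmP \<equiv> ln (real (16 * N * m * P) / delta)"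
abbreviation "ln_16N2P2 \<equiv> ln (real (16 * N\<^sup>2 * P\<^sup>2) / delta)"

lemma ln_16NmP_bounds: "0 \<le> ln_16NmP" "ln_16NmP \<le> ln_TdNmP"
proof -
  have NmP: "1 \<le> real N * real m * real P"
    using sizes by (intro mult_ge1_I) auto
  then show "0 \<le> ln_16NmP"
    using one_le_ln_divide_delta[of "real (16 * N * m * P)"] by (simp add: mult.assoc)
  have "real N * real m * real P \<le> real d * (real N * real m * real P)"
    using sizes NmP by simp
  with T_ge_16 have "16 * (real N * real m * real P) \<le> real T * (real d * (real N * real m * real P))"
    by (rule mult_mono) (use NmP in auto)
  then show "ln_16NmP \<le> ln_TdNmP"
    using sizes ln_divide_delta_mono[of "real (16 * N * m * P)"] by (simp add: mult_ac)
qed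

lemma ln_16N2P2_bounds: "1 \<le> ln_16N2P2" "ln_16N2P2 \<le> 2 * ln_TNmP"
proof -
  have "1 \<le> (real N)\<^sup>2 * (real P)\<^sup>2"
    using sizes by (intro mult_ge1_I) auto
  then show "1 \<le> ln_16N2P2"
    using one_le_ln_divide_delta[of "real (16 * N\<^sup>2 * P\<^sup>2)"] by (simp add: mult.assoc)
  have "16 * 1 \<le> (real T)\<^sup>2 * (real m)\<^sup>2"
    using T_ge_16 power_mono[OF T_ge_16, of 2] sizes by (intro mult_mono) auto
  then have "16 * ((real N)\<^sup>2 * (real P)\<^sup>2) \<le> ((real T)\<^sup>2 * (real m)\<^sup>2) * ((real N)\<^sup>2 * (real P)\<^sup>2)"
    by (intro mult_right_mono) auto
  then have "ln_16N2P2 \<le> ln ((real T * real N * real m * real P)\<^sup>2 / delta)"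
    using sizes ln_divide_delta_mono[of "real (16 * N\<^sup>2 * P\<^sup>2)"] by (simp add: power_mult_distrib mult_ac)
  also have "\<dots> \<le> ln ((real T * real N * real m * real P / delta)\<^sup>2)"
    using sizes positive by (intro ln_mono) (auto simp: power_divide power2_eq_square field_simps)
  also have "\<dots> = 2 * ln_TNmP"
    using sizes positive by (simp add: ln_realpow)
  finally show "ln_16N2P2 \<le> 2 * ln_TNmP" .
qed

lemma unlabeled_fraction_bounds: "0 \<le> pun" "pun * real N \<le> ln (real d) / C"
proof -
  have "pun = 0 \<or> (C / real N \<le> pun \<and> pun \<le> inverse C * ln (real d) / real N)"
    using conds unfolding standing_conds_def by blast
  moreover have "0 \<le> C / real N"
    using positive by simp
  ultimately show "0 \<le> pun"
    by linarith
  show "pun * real N \<le> ln (real d) / C"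
    using \<open>pun = 0 \<or> _\<close> positive sizes by (auto simp: field_simps)
qed

lemma noise_labeled_part: "real m * real P * (3 * s0 * sn * sqrt (real d * ln_16NmP)) ^ 3 \<le> 27 / C ^ 3"
proof -
  define mp pp where "mp = real m powr (2/3)" and "pp = real P powr (2/3)"
  have mp: "1 \<le> mp" "mp ^ 3 = (real m)\<^sup>2" and pp: "1 \<le> pp" "pp ^ 3 = (real P)\<^sup>2"
    unfolding mp_def pp_def using sizes by (auto intro: ge_one_powr_ge_zero powr_two_thirds_cube)
  have "sqrt ln_16NmP \<le> sqrt ln_TdNmP"
    using ln_16NmP_bounds by simp
  also have "\<dots> \<le> ln_TdNmP"
    using ln_16m_bounds by (intro sqrt_le_self) linarith
  finally have "3 * s0 * sn * sqrt (real d * ln_16NmP) \<le> 3 * (s0 * ln_TdNmP * sn * sqrt (real d))"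
    using positive by (simp add: real_sqrt_mult mult_left_mono mult_ac)
  also have "\<dots> \<le> 3 * (1 / (C * mp * pp))"
  proof -
    have "(s0 * ln_TdNmP * sn * sqrt (real d)) * (C * mp * pp) \<le> 1"
      using s0_bounds(1) unfolding mp_def pp_def by (simp add: mult_ac)
    then show ?thesis
      using positive mp pp by (simp add: pos_le_divide_eq)
  qed
  finally have "(3 * s0 * sn * sqrt (real d * ln_16NmP)) ^ 3 \<le> (3 * (1 / (C * mp * pp))) ^ 3"
    using positive ln_16NmP_bounds by (intro power_mono) auto
  also have "\<dots> = 27 / (C ^ 3 * (real m)\<^sup>2 * (real P)\<^sup>2)"
    by (simp add: power_divide power_mult_distrib mp pp)
  finally have "real m * real P * (3 * s0 * sn * sqrt (real d * ln_16NmP)) ^ 3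
      \<le> real m * real P * (27 / (C ^ 3 * (real m)\<^sup>2 * (real P)\<^sup>2))"
    using sizes by (intro mult_left_mono) auto
  also have "\<dots> = 27 / (C ^ 3 * (real m * real P))"
    using sizes by (simp add: power2_eq_square field_simps)
  also have "\<dots> \<le> 27 / (C ^ 3 * 1)"
    using sizes positive by (intro divide_left_mono mult_left_mono mult_ge1_I) auto
  finally show ?thesis
    by simp
qed

lemma noise_log_factors:
  "ln (real d) ^ 3 * cbrt_ln_T ^ 3 * sqrt ln_16N2P2 ^ 3 \<le> (216 * sqrt (real d)) * ln_TNmP * (4 * ln_TNmP\<^sup>2)"
proof -
  have "sqrt ln_16N2P2 ^ 3 = ln_16N2P2 * sqrt ln_16N2P2"
    using ln_16N2P2_bounds by (simp add: power3_eq_cube)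
  also have "\<dots> \<le> (2 * ln_TNmP) * (2 * ln_TNmP)"
    using ln_16N2P2_bounds sqrt_le_self[of ln_16N2P2] by (intro mult_mono) auto
  finally have "sqrt ln_16N2P2 ^ 3 \<le> 4 * ln_TNmP\<^sup>2"
    by (simp add: power2_eq_square)
  moreover have "cbrt_ln_T ^ 3 \<le> ln_TNmP"
    using cbrt_ln_T(1) ln_T_bounds(2) by simp
  moreover have "1 \<le> real d"
    using sizes by simp
  moreover have "0 \<le> cbrt_ln_T ^ 3" "0 \<le> sqrt ln_16N2P2 ^ 3" "0 \<le> ln_TNmP"
    using cbrt_ln_T(2) ln_16N2P2_bounds(1) one_le_ln_TNmP by simp_all
  ultimately show ?thesis
    using ln_cube_le_sqrt[of "real d"] by (intro mult_mono) auto
qed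

lemma noise_unlabeled_cube_le:
  "(21 * pun * real N * real P * cbrt_ln_T / sqrt (real d) * sqrt ln_16N2P2) ^ 3
    \<le> 21 ^ 3 * 864 * real P ^ 3 * ln_TNmP ^ 3 / (C ^ 3 * real d)"
proof -
  have d: "0 < sqrt (real d)" "sqrt (real d) ^ 3 = real d * sqrt (real d)"
    using sizes by (auto simp: power3_eq_cube)
  define R where "R = 21 * real P * cbrt_ln_T * sqrt ln_16N2P2 / sqrt (real d)"
  have R_nonneg: "0 \<le> R"
    unfolding R_def using cbrt_ln_T(2) ln_16N2P2_bounds(1) by simp
  have "21 * pun * real N * real P * cbrt_ln_T / sqrt (real d) * sqrt ln_16N2P2 = (pun * real N) * R"
    unfolding R_def by (simp add: mult_ac)
  also have "\<dots> \<le> (ln (real d) / C) * R"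
    using unlabeled_fraction_bounds(2) R_nonneg by (rule mult_right_mono)
  finally have "(21 * pun * real N * real P * cbrt_ln_T / sqrt (real d) * sqrt ln_16N2P2) ^ 3
      \<le> ((ln (real d) / C) * R) ^ 3"
    using unlabeled_fraction_bounds(1) R_nonneg \<open>_ = (pun * real N) * R\<close> by (intro power_mono) auto
  also have "\<dots> = 21 ^ 3 * real P ^ 3 * (ln (real d) ^ 3 * cbrt_ln_T ^ 3 * sqrt ln_16N2P2 ^ 3)
      / (C ^ 3 * sqrt (real d) ^ 3)"
    unfolding R_def by (simp add: power_divide power_mult_distrib mult_ac)
  also have "\<dots> \<le> 21 ^ 3 * real P ^ 3 * ((216 * sqrt (real d)) * ln_TNmP * (4 * ln_TNmP\<^sup>2))
      / (C ^ 3 * sqrt (real d) ^ 3)"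
    using noise_log_factors positive d by (intro divide_right_mono mult_left_mono) auto
  also have "\<dots> = 21 ^ 3 * 864 * real P ^ 3 * ln_TNmP ^ 3 / (C ^ 3 * real d)"
    using d by (simp add: power2_eq_square power3_eq_cube field_simps)
  finally show ?thesis .
qed

lemma noise_unlabeled_part:
  "real m * real P * (21 * pun * real N * real P * cbrt_ln_T / sqrt (real d) * sqrt ln_16N2P2) ^ 3
    \<le> 21 ^ 3 * 864 / C\<^sup>2"
proof -
  let ?La = ln_TNmP and ?K = "21 ^ 3 * 864 :: real"
  have La_pos: "0 < ?La"
    using one_le_ln_TNmP by simp
  have "?K * real P ^ 3 * ?La ^ 3 / (C ^ 3 * real d)
      \<le> ?K * real P ^ 3 * ?La ^ 3 / (C ^ 3 * (C * (real m)\<^sup>2 * (real P)\<^sup>2 * (real N)\<^sup>2 * ?La ^ 4))"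
    using conds positive sizes La_pos unfolding standing_conds_def
    by (intro divide_left_mono mult_left_mono) auto
  with noise_unlabeled_cube_le
  have "real m * real P * (21 * pun * real N * real P * cbrt_ln_T / sqrt (real d) * sqrt ln_16N2P2) ^ 3
      \<le> real m * real P * (?K * real P ^ 3 * ?La ^ 3 / (C ^ 3 * (C * (real m)\<^sup>2 * (real P)\<^sup>2 * (real N)\<^sup>2 * ?La ^ 4)))"
    by (intro mult_left_mono) auto
  also have "\<dots> = ?K * (real P)\<^sup>2 / (C\<^sup>2 * C\<^sup>2 * (real m * (real N)\<^sup>2 * ?La))"
    using sizes positive La_pos by (simp add: eval_nat_numeral field_simps)
  also have "\<dots> \<le> ?K * C\<^sup>2 / (C\<^sup>2 * C\<^sup>2 * 1)"
    using sizes positive one_le_ln_TNmP conds unfolding standing_conds_def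
    by (intro divide_mono mult_left_mono power_mono mult_ge1_I one_le_power) auto
  also have "\<dots> = ?K / C\<^sup>2"
    using positive by (simp add: power2_eq_square)
  finally show ?thesis .
qed

lemma noise_small:
  defines "B \<equiv> 3 * s0 * sn * sqrt (real d * ln_16NmP)
    + 21 * pun * real N * real P * cbrt_ln_T / sqrt (real d) * sqrt ln_16N2P2"
  shows "0 \<le> B" "real m * real P * B ^ 3 \<le> 1/4"
proof -
  let ?B1 = "3 * s0 * sn * sqrt (real d * ln_16NmP)"
    and ?B2 = "21 * pun * real N * real P * cbrt_ln_T / sqrt (real d) * sqrt ln_16N2P2"
  have B1: "0 \<le> ?B1"
    using positive ln_16NmP_bounds by simp
  have B2: "0 \<le> ?B2"
    using unlabeled_fraction_bounds cbrt_ln_T(2) ln_16N2P2_bounds by simp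
  then show "0 \<le> B"
    unfolding B_def using B1 by simp
  have "real m * real P * B ^ 3 \<le> real m * real P * (4 * (?B1 ^ 3 + ?B2 ^ 3))"
    unfolding B_def using cube_of_sum_le[OF B1 B2] by (intro mult_left_mono) auto
  also have "\<dots> = 4 * (real m * real P * ?B1 ^ 3) + 4 * (real m * real P * ?B2 ^ 3)"
    by (simp add: algebra_simps)
  also have "\<dots> \<le> 4 * (27 / C ^ 3) + 4 * (21 ^ 3 * 864 / C\<^sup>2)"
    using noise_labeled_part noise_unlabeled_part by simp
  also have "\<dots> \<le> 4 * (27 / 1000000 ^ 3) + 4 * (21 ^ 3 * 864 / 1000000\<^sup>2)"
    using C_large by (intro add_mono mult_left_mono divide_left_mono power_mono) auto
  also have "\<dots> \<le> 1/4"
    by simp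
  finally show "real m * real P * B ^ 3 \<le> 1/4" .
qed

section \<open>The signal coordinate under adversarial training\<close>

lemma adv_margin_small_noise:
  assumes data: "data_support N P d alpha SL SU y s X" and "i \<in> SL"
    and feasible: "adv_feasible P d eps (X i) (s i) X'"
    and noise: "\<And>r p. r \<in> {1..m} \<Longrightarrow> p \<in> {1..P} \<Longrightarrow> p \<noteq> s i \<Longrightarrow>
      \<bar>ip d (W r) (X i p)\<bar> \<le> 3 * s0 * sn * sqrt (real d * ln_16NmP)
        + 21 * pun * real N * real P * cbrt_ln_T / sqrt (real d) * sqrt ln_16N2P2"
  shows "(\<Sum>r=1..m. (X' (s i) 1 * y i) ^ 3 * (W r 1) ^ 3) - 1/4 \<le> y i * fW m P d W X'"
proof -
  have "1 \<le> d"
    using d_large C_large by simp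
  from adv_margin_lower_bound[where W = W and m = m, OF data this assms(2) feasible noise noise_small(1)]
  show ?thesis
    using noise_small(2) by linarith
qed

lemma signal_coord_bounded:
  assumes data: "data_support N P d alpha SL SU y s X"
    and init: "event_E N P d m sn s0 delta y s X (W 0)"
    and adv: "\<And>\<tau> i. i \<in> {1..N} \<Longrightarrow> is_adv m P d eps (W \<tau>) (y i) (X i) (s i) (Xadv \<tau> i)"
    and train: "\<And>\<tau>. W (Suc \<tau>) = train_step N m P d eta y (Xadv \<tau>) (W \<tau>)"
    and "t \<le> T"
    and noise: "\<And>\<tau> r i j. \<tau> \<le> t \<Longrightarrow> r \<in> {1..m} \<Longrightarrow> i \<in> SL \<Longrightarrow> j \<in> {1..P} \<Longrightarrow> j \<noteq> s i \<Longrightarrow>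
      \<bar>ip d (W \<tau> r) (X i j)\<bar> \<le> 3 * s0 * sn * sqrt (real d * ln_16NmP)
        + 21 * pun * real N * real P * cbrt_ln_T / sqrt (real d) * sqrt ln_16N2P2"
    and "r \<in> {1..m}"
  shows "W t r 1 \<le> 3 * cbrt_ln_T / alpha"
proof -
  have d: "2 \<le> d"
    using d_large C_large by simp
  have SL: "SL \<subseteq> {1..N}"
    using data_supportD(1)[OF data] .
  have feasible: "adv_feasible P d eps (X i) (s i) (Xadv \<tau> i)" if "i \<in> {1..N}" for \<tau> i
    using adv[OF that] unfolding is_adv_def by blast
  \<comment> \<open>the amplitude of the perturbed signal patch, which is \<open>a y e\<^sub>1\<close>\<close>
  define a where "a \<tau> i = Xadv \<tau> i (s i) 1 * y i" for \<tau> i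
  define z where "z \<tau> i = y i * fW m P d (W \<tau>) (Xadv \<tau> i)" for \<tau> i
  have step: "W (Suc \<tau>) r' 1 = W \<tau> r' 1 + eta / real N *
      (\<Sum>i\<in>SL. logloss_slope (z \<tau> i) * (3 * a \<tau> i ^ 3 * (W \<tau> r' 1) ^ 2))" if "r' \<in> {1..m}" for \<tau> r'
    unfolding train z_def a_def using adv_train_step_signal_coord[OF data d that feasible] .
  have amplitude: "4/5 * alpha \<le> a \<tau> i \<and> a \<tau> i \<le> 6/5 * alpha" if "i \<in> SL" for \<tau> i
  proof -
    have i: "i \<in> {1..N}"
      using SL that by auto
    have "\<bar>a \<tau> i - alpha\<bar> \<le> eps"
      unfolding a_def using d adv_feasible_labeled_signal(1)[OF feasible[OF i] data_supportD(3)[OF data i] _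
          data_supportD(2)[OF data i] data_supportD(4)[OF data that]] by simp
    then show ?thesis
      using eps_le by (auto simp: abs_le_iff)
  qed
  have margin: "(\<Sum>r'\<in>{1..m}. a \<tau> i ^ 3 * (W \<tau> r' 1) ^ 3) - 1/4 \<le> z \<tau> i" if "\<tau> < t" "i \<in> SL" for \<tau> i
  proof -
    have "i \<in> {1..N}"
      using SL that(2) by auto
    then show ?thesis
      unfolding a_def z_def
      by (rule adv_margin_small_noise[OF data that(2) feasible]) (use noise that in auto)
  qed
  have "finite SL" "card SL \<le> N"
    using SL finite_subset card_mono[OF finite_atLeastAtMost SL] by auto
  moreover have "real t \<le> real T" "1 \<le> real T"
    using \<open>t \<le> T\<close> sizes by auto
  ultimately have "W t r 1 \<le> 3 * (cbrt_ln_T / alpha)"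
    using step amplitude margin event_E_init_coord1[OF init] d init_small cbrt_ln_T(1,2) eta_small
      positive(1,4) \<open>r \<in> {1..m}\<close>
    by (intro signal_coordinate_bounded[where w = "\<lambda>\<tau> r. W \<tau> r 1" and R = "{1..m}" and S = SL
        and \<iota> = "s0 * sqrt (2 * ln (16 * real m / delta))" and l = cbrt_ln_T and T = "real T"]) auto
  then show ?thesis
    by simp
qed

end

theorem lemmaF6:
  shows "\<exists>C>0. \<forall>(N::nat) (P::nat) (d::nat) (m::nat) (alpha::real) (sn::real) (s0::real) (eta::real)
      (eps::real) (Gam::real) (delta::real) (T::nat) (SL::nat set) (SU::nat set)
      (y::nat \<Rightarrow> real) (s::nat \<Rightarrow> nat) (X::nat \<Rightarrow> nat \<Rightarrow> nat \<Rightarrow> real)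
      (Xadv::nat \<Rightarrow> nat \<Rightarrow> nat \<Rightarrow> nat \<Rightarrow> real) (W::nat \<Rightarrow> nat \<Rightarrow> nat \<Rightarrow> real) (t::nat).
    standing_conds C N P d m alpha sn s0 eta eps Gam delta T (real (card SU) / real N) \<and>
    data_support N P d alpha SL SU y s X \<and>
    (\<forall>r\<in>{1..m}. W 0 r d = 0) \<and>
    event_E N P d m sn s0 delta y s X (W 0) \<and>
    (\<forall>\<tau> i. i \<in> {1..N} \<longrightarrow> is_adv m P d eps (W \<tau>) (y i) (X i) (s i) (Xadv \<tau> i)) \<and>
    (\<forall>\<tau>. W (Suc \<tau>) = train_step N m P d eta y (Xadv \<tau>) (W \<tau>)) \<and>
    t \<le> T \<and>
    (\<forall>\<tau>\<le>t. \<forall>r\<in>{1..m}. \<forall>i\<in>SL. \<forall>j\<in>{1..P}. j \<noteq> s i \<longrightarrow>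
        \<bar>ip d (W \<tau> r) (X i j)\<bar> \<le> 3 * s0 * sn * sqrt (d * ln (16 * N * m * P / delta))
          + 21 * (real (card SU) / real N) * N * P * (ln T) powr (1/3) / sqrt d
            * sqrt (ln (16 * N^2 * P^2 / delta)))
    \<longrightarrow> (\<forall>r\<in>{1..m}. W t r 1 \<le> 3 * (ln T) powr (1/3) / alpha)"
proof (intro exI[of _ "1000000 :: real"] conjI allI impI ballI, goal_cases)
  case 1
  show ?case
    by simp
next
  case (2 N P d m alpha sn s0 eta eps Gam delta T SL SU y s X Xadv W t r)
  then interpret standing_parameters 1000000 N P d m alpha sn s0 eta eps Gam delta T "real (card SU) / real N"
    by unfold_locales simp_all
  from 2 show ?case
    by (elim conjE)
      (rule signal_coord_bounded[where SL = SL and SU = SU and y = y and s = s and X = X and Xadv = Xadv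
          and W = W]; auto)
qed

end
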